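(* There exists an Orlicz function $\Phi$ on $[0,\infty)$ such that $C_\Phi^\infty\cong\{t\}$ and $E_\Phi^\infty\not\equiv\{t\}$.
   Context: An Orlicz function is an increasing convex function $F$ on $[0,\infty)$ with $F(0)=0$ and $\lim_{t\to\infty}F(t)=\infty$. For an Orlicz function $F$ and $A>0$, let $E_{F,A}^\infty$ be the closure in $C[0,1]$ of the set of functions $\{x\mapsto F(xy)/F(y):\ y>A\}$ (on $[0,1]$); set $E_F^\infty:=\bigcap_{A>0}E_{F,A}^\infty$ and $C_F^\infty:=\overline{\mathrm{conv}\,E_F^\infty}$ (closure in $C[0,1]$ of the convex hull). For a set $S$ of functions on $[0,1]$ and a function $\varphi$ on $[0,1]$, write $S\cong\{\varphi\}$ if for every $H\in S$ there is a constant $C=C(H)>0$ with $C^{-1}\varphi(t)\le H(t)\le C\varphi(t)$ for all $0<t\le 1$; write $S\equiv\{\varphi\}$ if there is a single constant $C>0$ such that this holds for all $H\in S$. *)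

theory Defs
  imports "HOL-Analysis.Analysis"
begin

definition orlicz_function :: "(real \<Rightarrow> real) \<Rightarrow> bool" where
  "orlicz_function F \<longleftrightarrow> mono_on {0..} F \<and> convex_on {0..} F \<and> F 0 = 0
     \<and> filterlim F at_top at_top"

text \<open>Closure in C[0,1] (sup norm on [0,1]); functions are real \<Rightarrow> real, only values
  on [0,1] matter.\<close>
definition C01_closure :: "(real \<Rightarrow> real) set \<Rightarrow> (real \<Rightarrow> real) set" where
  "C01_closure S = {g. continuous_on {0..1} g \<and>
      (\<forall>e>0. \<exists>f\<in>S. \<forall>x\<in>{0..1}. \<bar>f x - g x\<bar> < e)}"

definition fun_conv :: "(real \<Rightarrow> real) set \<Rightarrow> (real \<Rightarrow> real) set" where
  "fun_conv S = {h. \<exists>(n::nat) (a::nat \<Rightarrow> real) (f::nat \<Rightarrow> real \<Rightarrow> real).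
      (\<forall>i<n. 0 \<le> a i \<and> f i \<in> S) \<and> (\<Sum>i<n. a i) = 1 \<and>
      h = (\<lambda>x. \<Sum>i<n. a i * f i x)}"

definition E_FA :: "(real \<Rightarrow> real) \<Rightarrow> real \<Rightarrow> (real \<Rightarrow> real) set" where
  "E_FA F A = C01_closure {(\<lambda>x. F (x * y) / F y) | y. y > A}"

definition E_F :: "(real \<Rightarrow> real) \<Rightarrow> (real \<Rightarrow> real) set" where
  "E_F F = (\<Inter>A\<in>{0<..}. E_FA F A)"

definition C_F :: "(real \<Rightarrow> real) \<Rightarrow> (real \<Rightarrow> real) set" where
  "C_F F = C01_closure (fun_conv (E_F F))"

text \<open>S \<cong> {phi}: each H has its own constant.\<close>
definition equiv_each :: "(real \<Rightarrow> real) set \<Rightarrow> (real \<Rightarrow> real) \<Rightarrow> bool" where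
  "equiv_each S \<phi> \<longleftrightarrow> (\<forall>H\<in>S. \<exists>C>0. \<forall>t\<in>{0<..1}.
      \<phi> t / C \<le> H t \<and> H t \<le> C * \<phi> t)"

text \<open>S \<equiv> {phi}: a single uniform constant.\<close>
definition equiv_unif :: "(real \<Rightarrow> real) set \<Rightarrow> (real \<Rightarrow> real) \<Rightarrow> bool" where
  "equiv_unif S \<phi> \<longleftrightarrow> (\<exists>C>0. \<forall>H\<in>S. \<forall>t\<in>{0<..1}.
      \<phi> t / C \<le> H t \<and> H t \<le> C * \<phi> t)"

end

theory Submission
  imports Defs
begin

text \<open>Take \<open>Phi z = z * profile (ln z)\<close>, where the profile is the continuous, convex, piecewise linear
  function with knots at the squares \<open>n^2\<close> and slope \<open>2^n * n!\<close> between \<open>n^2\<close> and \<open>(n+1)^2\<close>.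
  Along \<open>y = exp (n^2 + v)\<close> the ratios \<open>Phi (x * y) / Phi y\<close> converge uniformly to
  \<open>x * (1 + v + ln (max x (exp (- v)))) / (1 + v)\<close>, which equals \<open>x / (1 + v)\<close> at \<open>x = exp (- v)\<close>;
  so no single constant works for all of \<open>E_F Phi\<close>. On the other hand, for large \<open>y\<close> every ratio
  \<open>G\<close> satisfies \<open>G 1 = 1\<close>, \<open>G t / t\<close> is increasing, and
  \<open>G (2 s) / (2 s) - G s / s \<le> G t / t\<close> for \<open>t \<le> s \<le> 1/2\<close>: the factorial growth of the slopes makes
  the increment of the profile over a step of length \<open>ln 2\<close> small against its value. These affine
  conditions survive convex combinations and uniform limits, and they force every element of
  \<open>C_F Phi\<close> to be comparable with the identity.\<close>

definition knot :: "nat \<Rightarrow> real" where "knot n = real (n * n)"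

fun slope :: "nat \<Rightarrow> real" where
  "slope 0 = 1" | "slope (Suc n) = slope n * (2 * real n + 2)"

definition piece :: "nat \<Rightarrow> real \<Rightarrow> real" where
  "piece n s = slope n * (1 + s - knot n)"

definition segment :: "real \<Rightarrow> nat" where
  "segment s = (LEAST n. s < knot (Suc n))"

text \<open>On \<open>[knot n, knot (Suc n))\<close> the profile is \<open>piece n\<close>. Consecutive pieces agree at the knot
  between them, so the profile is continuous, and convex because the slopes increase; it is the
  upper envelope of all pieces.\<close>

definition profile :: "real \<Rightarrow> real" where
  "profile s = (if s < 0 then 1 else piece (segment s) s)"

definition Phi :: "real \<Rightarrow> real" where
  "Phi z = (if z \<le> 0 then 0 else z * profile (ln z))"

lemma knot_mono: "m \<le> n \<Longrightarrow> knot m \<le> knot n"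
  unfolding knot_def by (simp add: mult_mono)

lemma knot_Suc_diff: "knot (Suc n) - knot n = 2 * real n + 1"
  unfolding knot_def by (simp add: algebra_simps)

lemma real_le_knot: "real n \<le> knot n"
  unfolding knot_def by (cases n) auto

lemma slope_ge_1: "slope n \<ge> 1"
proof (induction n)
  case (Suc n)
  have "1 * 1 \<le> slope n * (2 * real n + 2)"
    using Suc.IH by (intro mult_mono) auto
  then show ?case by simp
qed simp

lemma piece_Suc_diff:
  "piece (Suc n) s - piece n s = slope n * (2 * real n + 1) * (s - knot (Suc n))"
  unfolding piece_def using knot_Suc_diff[of n] by (simp add: algebra_simps)

lemma piece_le_right: "m \<le> n \<Longrightarrow> knot n \<le> s \<Longrightarrow> piece m s \<le> piece n s"
proof (induction n)
  case (Suc n)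
  show ?case
  proof (cases "m = Suc n")
    case False
    with Suc.prems have "piece m s \<le> piece n s"
      using Suc.IH knot_mono[of n "Suc n"] by simp
    moreover have "piece (Suc n) s - piece n s \<ge> 0"
      unfolding piece_Suc_diff using slope_ge_1[of n] Suc.prems by simp
    ultimately show ?thesis by simp
  qed simp
qed simp

lemma piece_le_left: "n \<le> m \<Longrightarrow> s \<le> knot (Suc n) \<Longrightarrow> piece m s \<le> piece n s"
proof (induction m)
  case (Suc m)
  show ?case
  proof (cases "n = Suc m")
    case False
    with Suc.prems have "n \<le> m" by simp
    with Suc have "piece m s \<le> piece n s" by simp
    moreover have "s \<le> knot (Suc m)"
      using knot_mono[of "Suc n" "Suc m"] \<open>n \<le> m\<close> Suc.prems by simp
    then have "piece (Suc m) s - piece m s \<le> 0"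
      unfolding piece_Suc_diff using slope_ge_1[of m] by (intro mult_nonneg_nonpos) auto
    ultimately show ?thesis by simp
  qed simp
qed simp

lemma segment_bounds:
  assumes "0 \<le> s"
  shows "knot (segment s) \<le> s" "s < knot (Suc (segment s))"
proof -
  obtain n :: nat where "s < real n" using reals_Archimedean2 by blast
  then have "\<exists>n. s < knot (Suc n)" using real_le_knot[of "Suc n"] by (intro exI[of _ n]) simp
  then show "s < knot (Suc (segment s))"
    unfolding segment_def by (rule LeastI_ex)
  show "knot (segment s) \<le> s"
  proof (cases "segment s")
    case (Suc k)
    then have "k < segment s" by simp
    then have "\<not> s < knot (Suc k)"
      unfolding segment_def by (rule not_less_Least)
    then show ?thesis using Suc by simp
  qed (use assms in \<open>simp add: knot_def\<close>)
qed

lemma segment_eq: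
  assumes "knot n \<le> s" "s < knot (Suc n)"
  shows "segment s = n"
  unfolding segment_def
proof (rule Least_equality)
  fix m assume m: "s < knot (Suc m)"
  show "n \<le> m"
  proof (rule ccontr)
    assume "\<not> n \<le> m"
    then have "knot (Suc m) \<le> knot n" by (intro knot_mono) simp
    with assms m show False by simp
  qed
qed fact

lemma piece_le_profile: "piece n s \<le> profile s"
proof (cases "s < 0")
  case True
  show ?thesis
  proof (cases n)
    case (Suc k)
    then have "1 + s - knot n < 0" using True real_le_knot[of n] by simp
    then have "piece n s < 0" unfolding piece_def using slope_ge_1[of n] by (simp add: mult_pos_neg)
    then show ?thesis using True by (simp add: profile_def)
  qed (use True in \<open>simp add: profile_def piece_def knot_def\<close>)
next
  case False
  then have s: "0 \<le> s" "profile s = piece (segment s) s" by (simp_all add: profile_def)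
  show ?thesis
  proof (cases "n \<le> segment s")
    case True then show ?thesis using piece_le_right segment_bounds(1)[OF s(1)] s by simp
  next
    case False
    then show ?thesis using piece_le_left[of "segment s" n s] segment_bounds(2)[OF s(1)] s by simp
  qed
qed

lemma profile_ge_1: "profile s \<ge> 1"
proof (cases "s < 0")
  case False
  then show ?thesis using piece_le_profile[of 0 s] by (simp add: piece_def knot_def)
qed (simp add: profile_def)

lemma profile_eq_piece:
  assumes "knot n \<le> s" "s < knot (Suc n)"
  shows "profile s = piece n s"
proof -
  have "0 \<le> s" using assms(1) by (simp add: knot_def order_trans[OF _ assms(1)])
  then show ?thesis by (simp add: profile_def segment_eq[OF assms])
qed

lemma profile_mono: "s \<le> s' \<Longrightarrow> profile s \<le> profile s'"
proof (cases "s < 0")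
  case True then show ?thesis using profile_ge_1[of s'] by (simp add: profile_def)
next
  case False
  assume "s \<le> s'"
  then have "profile s \<le> piece (segment s) s'"
    using False slope_ge_1[of "segment s"] by (simp add: profile_def piece_def)
  also have "\<dots> \<le> profile s'" by (rule piece_le_profile)
  finally show ?thesis .
qed

lemma Phi_ge: "z > 0 \<Longrightarrow> Phi z \<ge> z"
  using profile_ge_1[of "ln z"] by (simp add: Phi_def)

lemma Phi_nonneg: "Phi z \<ge> 0"
  using profile_ge_1[of "ln z"] by (simp add: Phi_def)

lemma Phi_ratio:
  assumes "y > 0" "x > 0"
  shows "Phi (x * y) / (x * Phi y) = profile (ln x + ln y) / profile (ln y)"
proof -
  have "\<not> x * y \<le> 0" using assms by (simp add: not_le)
  then have "Phi (x * y) = x * y * profile (ln x + ln y)"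
    unfolding Phi_def using assms by (simp only: if_False) (simp add: ln_mult)
  moreover have "Phi y = y * profile (ln y)" using assms by (simp add: Phi_def)
  ultimately show ?thesis using assms profile_ge_1[of "ln y"] by simp
qed

lemma Phi_mono: "mono_on {0..} Phi"
proof (rule mono_onI)
  fix x y :: real assume xy: "x \<in> {0..}" "y \<in> {0..}" "x \<le> y"
  show "Phi x \<le> Phi y"
  proof (cases "x = 0")
    case True then show ?thesis using Phi_nonneg[of y] by (simp add: Phi_def)
  next
    case False
    then have x: "x > 0" using xy by simp
    have "Phi x = x * profile (ln x)" using x by (simp add: Phi_def)
    also have "\<dots> \<le> y * profile (ln x)"
      using xy profile_ge_1[of "ln x"] by (intro mult_right_mono) auto
    also have "\<dots> \<le> y * profile (ln y)" using xy x by (intro mult_left_mono profile_mono) auto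
    also have "\<dots> = Phi y" using x xy by (simp add: Phi_def)
    finally show ?thesis .
  qed
qed

text \<open>Each piece gives a convex minorant \<open>z * piece m (ln z)\<close> of \<open>Phi\<close>, touching it where
  \<open>ln z\<close> lies in the \<open>m\<close>-th segment; below \<open>z = 1\<close>, \<open>Phi\<close> is the identity.\<close>

lemma convex_on_piece_minorant: "convex_on {0<..} (\<lambda>z. z * piece m (ln z))"
proof (rule convex_on_realI[where f' = "\<lambda>z. slope m * (2 + ln z - knot m)"])
  fix x :: real assume "x \<in> {0<..}"
  then show "((\<lambda>z. z * piece m (ln z)) has_real_derivative slope m * (2 + ln x - knot m)) (at x)"
    unfolding piece_def by (auto intro!: derivative_eq_intros simp: field_simps)
next
  fix x y :: real assume "x \<in> {0<..}" "y \<in> {0<..}" "x \<le> y"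
  then show "slope m * (2 + ln x - knot m) \<le> slope m * (2 + ln y - knot m)"
    using slope_ge_1[of m] by (intro mult_left_mono) auto
qed simp

lemma Phi_convex: "convex_on {0..} Phi"
proof (rule convex_on_linorderI)
  fix t x y :: real
  assume t: "t > 0" "t < 1" and xy: "x \<in> {0..}" "y \<in> {0..}" "x < y"
  define w where "w = (1 - t) * x + t * y"
  have y: "y > 0" using xy by simp
  have "Phi w \<le> (1 - t) * Phi x + t * Phi y"
  proof (cases "x = 0")
    case True
    have ty: "t * y > 0" using t y by simp
    have "Phi (t * y) = t * y * profile (ln (t * y))" using ty by (simp add: Phi_def)
    also have "\<dots> \<le> t * y * profile (ln y)"
      using ty t y by (intro mult_left_mono profile_mono) (auto simp: ln_mult)
    also have "\<dots> = t * Phi y" using y by (simp add: Phi_def)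
    finally show ?thesis using True by (simp add: w_def Phi_def)
  next
    case False
    then have x: "x > 0" using xy by simp
    have w: "w > 0" unfolding w_def using t x y by (simp add: add_pos_pos)
    show ?thesis
    proof (cases "w < 1")
      case True
      then have "Phi w = w" using w by (simp add: Phi_def profile_def)
      also have "\<dots> \<le> (1 - t) * Phi x + t * Phi y"
        unfolding w_def using Phi_ge[OF x] Phi_ge[OF y] t
        by (intro add_mono mult_left_mono) auto
      finally show ?thesis .
    next
      case False
      define m where "m = segment (ln w)"
      have minorant: "z * piece m (ln z) \<le> Phi z" if "z > 0" for z
        using that piece_le_profile by (simp add: Phi_def mult_left_mono)
      have "Phi w = w * piece m (ln w)"
        using False by (simp add: Phi_def profile_def m_def)
      also have "\<dots> \<le> (1 - t) * (x * piece m (ln x)) + t * (y * piece m (ln y))"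
        using convex_onD[OF convex_on_piece_minorant[of m], of t x y] t x y by (simp add: w_def)
      also have "\<dots> \<le> (1 - t) * Phi x + t * Phi y"
        using minorant[OF x] minorant[OF y] t by (intro add_mono mult_left_mono) auto
      finally show ?thesis .
    qed
  qed
  then show "Phi ((1 - t) *\<^sub>R x + t *\<^sub>R y) \<le> (1 - t) * Phi x + t * Phi y"
    by (simp add: w_def)
qed simp

lemma orlicz_function_Phi: "orlicz_function Phi"
  unfolding orlicz_function_def
proof (intro conjI Phi_mono Phi_convex)
  show "filterlim Phi at_top at_top"
  proof (rule filterlim_at_top_mono[OF filterlim_ident])
    show "\<forall>\<^sub>F x in at_top. x \<le> Phi x"
      using eventually_gt_at_top[of 0] by eventually_elim (rule Phi_ge)
  qed
qed (simp add: Phi_def)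

text \<open>The conditions characterising \<open>C_F Phi\<close> are affine combinations of point evaluations, which
  pass to convex combinations and to uniform limits on \<open>[0,1]\<close>.\<close>

definition point_form :: "real \<Rightarrow> (real \<times> real) list \<Rightarrow> (real \<Rightarrow> real) \<Rightarrow> real" where
  "point_form c0 cs h = c0 + (\<Sum>(c, x)\<leftarrow>cs. c * h x)"

lemma point_form_Cons: "point_form c0 ((c, x) # cs) h = c * h x + point_form c0 cs h"
  by (simp add: point_form_def)

lemma point_form_diff_le:
  assumes "\<forall>(c, x)\<in>set cs. x \<in> {0..1}" "\<forall>x\<in>{0..1}. \<bar>f x - g x\<bar> \<le> e"
  shows "\<bar>point_form c0 cs f - point_form c0 cs g\<bar> \<le> (\<Sum>(c, x)\<leftarrow>cs. \<bar>c\<bar>) * e"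
  using assms(1)
proof (induction cs)
  case (Cons cx cs)
  obtain c x where cx: "cx = (c, x)" by fastforce
  have "\<bar>c * f x - c * g x\<bar> \<le> \<bar>c\<bar> * e"
    using assms(2) Cons.prems cx by (simp add: abs_mult mult_left_mono flip: right_diff_distrib)
  moreover have "point_form c0 (cx # cs) f - point_form c0 (cx # cs) g
      = (c * f x - c * g x) + (point_form c0 cs f - point_form c0 cs g)"
    by (simp add: cx point_form_Cons)
  ultimately show ?case
    using Cons abs_triangle_ineq[of "c * f x - c * g x"] by (simp add: cx distrib_right)
qed (simp add: point_form_def)

lemma point_form_convex_combination:
  assumes "(\<Sum>i<n. a i) = 1"
  shows "point_form c0 cs (\<lambda>x. \<Sum>i<n. a i * f i x) = (\<Sum>i<n. a i * point_form c0 cs (f i))"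
proof (induction cs)
  case Nil
  then show ?case using assms by (simp add: point_form_def flip: sum_distrib_right)
next
  case (Cons cx cs)
  obtain c x where cx: "cx = (c, x)" by fastforce
  have "c * (\<Sum>i<n. a i * f i x) = (\<Sum>i<n. a i * (c * f i x))"
    by (simp add: sum_distrib_left mult.left_commute)
  with Cons.IH show ?case
    by (simp add: cx point_form_Cons distrib_left sum.distrib)
qed

lemma point_form_nonneg_closure:
  assumes pts: "\<forall>(c, x)\<in>set cs. x \<in> {0..1}"
    and S: "\<forall>f\<in>S. 0 \<le> point_form c0 cs f"
    and g: "g \<in> C01_closure S"
  shows "0 \<le> point_form c0 cs g"
proof (rule ccontr)
  assume neg: "\<not> 0 \<le> point_form c0 cs g"
  define K where "K = (\<Sum>(c, x)\<leftarrow>cs. \<bar>c\<bar>) + 1"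
  have "0 \<le> (\<Sum>(c, x)\<leftarrow>cs. \<bar>c\<bar>)" by (induction cs) auto
  then have K: "K > 0" unfolding K_def by simp
  define e where "e = - point_form c0 cs g / K"
  have e: "e > 0" unfolding e_def using neg K by (simp add: divide_neg_pos)
  obtain f where f: "f \<in> S" "\<forall>x\<in>{0..1}. \<bar>f x - g x\<bar> < e"
    using g e unfolding C01_closure_def by blast
  have "\<bar>point_form c0 cs f - point_form c0 cs g\<bar> \<le> (K - 1) * e"
    unfolding K_def using f(2) point_form_diff_le[OF pts, of f g e] by (auto intro: less_imp_le)
  also have "\<dots> < K * e" using e by (simp add: left_diff_distrib)
  also have "K * e = - point_form c0 cs g" unfolding e_def using K by simp
  finally have "point_form c0 cs f < 0" by (simp add: abs_less_iff)
  then show False using S f(1) by auto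
qed

lemma point_form_nonneg_fun_conv:
  assumes S: "\<forall>f\<in>S. 0 \<le> point_form c0 cs f" and h: "h \<in> fun_conv S"
  shows "0 \<le> point_form c0 cs h"
proof -
  obtain n :: nat and a :: "nat \<Rightarrow> real" and f :: "nat \<Rightarrow> real \<Rightarrow> real"
    where af: "\<forall>i<n. 0 \<le> a i \<and> f i \<in> S" "(\<Sum>i<n. a i) = 1" "h = (\<lambda>x. \<Sum>i<n. a i * f i x)"
    using h unfolding fun_conv_def by blast
  have "0 \<le> (\<Sum>i<n. a i * point_form c0 cs (f i))"
    using af(1) S by (intro sum_nonneg mult_nonneg_nonneg) auto
  then show ?thesis using point_form_convex_combination[OF af(2)] af(3) by simp
qed

lemma point_form_nonneg_E_F:
  assumes pts: "\<forall>(c, x)\<in>set cs. x \<in> {0..1}"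
    and ev: "\<forall>\<^sub>F y in at_top. 0 \<le> point_form c0 cs (\<lambda>x. F (x * y) / F y)"
    and H: "H \<in> E_F F"
  shows "0 \<le> point_form c0 cs H"
proof -
  obtain A where A: "\<And>y. y \<ge> A \<Longrightarrow> 0 \<le> point_form c0 cs (\<lambda>x. F (x * y) / F y)"
    using ev by (auto simp: eventually_at_top_linorder)
  have "H \<in> E_FA F (max A 1)" using H by (auto simp: E_F_def)
  moreover have "\<forall>f\<in>{(\<lambda>x. F (x * y) / F y) | y. y > max A 1}. 0 \<le> point_form c0 cs f"
    using A by auto
  ultimately show ?thesis
    unfolding E_FA_def using point_form_nonneg_closure[OF pts] by blast
qed

lemma point_form_nonneg_C_F:
  assumes pts: "\<forall>(c, x)\<in>set cs. x \<in> {0..1}"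
    and ev: "\<forall>\<^sub>F y in at_top. 0 \<le> point_form c0 cs (\<lambda>x. F (x * y) / F y)"
    and G: "G \<in> C_F F"
  shows "0 \<le> point_form c0 cs G"
proof -
  have "\<forall>H\<in>E_F F. 0 \<le> point_form c0 cs H" using point_form_nonneg_E_F[OF pts ev] by blast
  then have "\<forall>h\<in>fun_conv (E_F F). 0 \<le> point_form c0 cs h"
    using point_form_nonneg_fun_conv by blast
  then show ?thesis using point_form_nonneg_closure[OF pts] G unfolding C_F_def by blast
qed

text \<open>If the doubling increment of \<open>G t / t\<close> is ever positive, it bounds \<open>G t / t\<close> from below;
  otherwise \<open>G t / t\<close> does not decrease under halving, so it stays above its value \<open>1\<close> at \<open>t = 1\<close>.\<close>

lemma ratio_bounded_below:
  fixes G :: "real \<Rightarrow> real"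
  assumes one: "G 1 = 1"
    and mono: "\<And>s t. 0 < s \<Longrightarrow> s \<le> t \<Longrightarrow> t \<le> 1 \<Longrightarrow> G s / s \<le> G t / t"
    and doubling: "\<And>t s. 0 < t \<Longrightarrow> t \<le> s \<Longrightarrow> s \<le> 1/2 \<Longrightarrow>
      G (2 * s) / (2 * s) - G s / s \<le> G t / t"
  shows "\<exists>d>0. \<forall>t\<in>{0<..1}. d \<le> G t / t"
proof (cases "\<exists>s. 0 < s \<and> s \<le> 1/2 \<and> G (2 * s) / (2 * s) - G s / s > 0")
  case True
  then obtain s where s: "0 < s" "s \<le> 1/2" and d: "G (2 * s) / (2 * s) - G s / s > 0" by blast
  have "G (2 * s) / (2 * s) - G t / t \<le> G s / s" if "0 < t" "t \<le> 1" for t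
  proof (cases "t \<le> s")
    case True then show ?thesis using doubling[of t s] that s by simp
  next
    case False then show ?thesis using mono[of s t] doubling[of s s] that s by simp
  qed
  with d show ?thesis by (intro exI[of _ "G (2 * s) / (2 * s) - G s / s"]) force
next
  case False
  then have halving: "G (2 * s) / (2 * s) \<le> G s / s" if "0 < s" "s \<le> 1/2" for s
    using that by force
  have dyadic: "1 \<le> G ((1/2)^k) / (1/2)^k" for k
  proof (induction k)
    case (Suc k)
    have "G (2 * (1/2)^Suc k) / (2 * (1/2)^Suc k) \<le> G ((1/2)^Suc k) / (1/2)^Suc k"
      by (rule halving) (simp_all add: power_le_one)
    moreover have "2 * (1/2::real)^Suc k = (1/2)^k" by simp
    ultimately have "G ((1/2)^k) / (1/2)^k \<le> G ((1/2)^Suc k) / (1/2)^Suc k" by simp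
    with Suc show ?case by linarith
  qed (simp add: one)
  have "1 \<le> G t / t" if t: "0 < t" "t \<le> 1" for t
  proof -
    obtain k where "(1/2::real)^k < t" using real_arch_pow_inv[of t "1/2"] t by auto
    then have "G ((1/2)^k) / (1/2)^k \<le> G t / t" using t by (intro mono) auto
    then show ?thesis using dyadic[of k] by linarith
  qed
  then show ?thesis by (intro exI[of _ 1]) auto
qed

lemma linear_bounds_of_ratio_conditions:
  fixes G :: "real \<Rightarrow> real"
  assumes one: "G 1 = 1"
    and mono: "\<And>s t. 0 < s \<Longrightarrow> s \<le> t \<Longrightarrow> t \<le> 1 \<Longrightarrow> G s / s \<le> G t / t"
    and doubling: "\<And>t s. 0 < t \<Longrightarrow> t \<le> s \<Longrightarrow> s \<le> 1/2 \<Longrightarrow>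
      G (2 * s) / (2 * s) - G s / s \<le> G t / t"
  shows "\<exists>C>0. \<forall>t\<in>{0<..1}. t / C \<le> G t \<and> G t \<le> C * t"
proof -
  obtain d where d: "d > 0" "\<forall>t\<in>{0<..1}. d \<le> G t / t"
    using ratio_bounded_below[OF assms] by blast
  define C where "C = 1 / min d 1"
  have C: "C \<ge> 1" "C > 0" unfolding C_def using d(1) by (auto simp: field_simps)
  have "t / C \<le> G t \<and> G t \<le> C * t" if t: "0 < t" "t \<le> 1" for t
  proof
    have "t / C \<le> d * t" unfolding C_def using t d(1) by (simp add: mult_right_mono)
    also have "\<dots> \<le> G t" using d(2) t by (simp add: le_divide_eq)
    finally show "t / C \<le> G t" .
    have "G t \<le> t" using mono[of t 1] one t by (simp add: divide_le_eq)
    also have "\<dots> \<le> C * t" using C t by simp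
    finally show "G t \<le> C * t" .
  qed
  then show ?thesis using C(2) by (intro exI[of _ C]) auto
qed

text \<open>An increment of the profile over a step of length \<open>ln 2 < 1\<close> inside the \<open>m\<close>-th segment is at
  most \<open>slope m * ln 2\<close>, whereas already the previous piece gives \<open>profile\<close> a value of order
  \<open>slope (m - 1) * 2 m = slope m\<close> a bounded distance to the left; the factorial growth of the slopes
  makes the second dominate.\<close>

lemma profile_increment_le:
  assumes \<beta>: "0 \<le> \<beta>" "\<beta> \<le> \<alpha>"
  shows "\<forall>\<^sub>F \<sigma> in at_top. profile (\<sigma> - \<beta> + ln 2) - profile (\<sigma> - \<beta>) \<le> profile (\<sigma> - \<alpha>)"
proof -
  define D :: real where "D = ln 2"
  have D: "0 \<le> D" "D < 1" unfolding D_def using ln_2_less_1 by auto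
  obtain M :: nat where "(D + \<alpha>) / (2 * (1 - D)) < real M" using reals_Archimedean2 by blast
  then have M: "D + \<alpha> \<le> 2 * real M * (1 - D)"
    using D by (simp add: divide_less_eq mult.commute mult.left_commute)
  have bound: "profile (\<sigma> - \<beta> + ln 2) - profile (\<sigma> - \<beta>) \<le> profile (\<sigma> - \<alpha>)"
    if \<sigma>: "knot (Suc M) + \<beta> \<le> \<sigma>" for \<sigma>
  proof -
    define X where "X = \<sigma> - \<beta> + D"
    have X: "knot (Suc M) \<le> X" unfolding X_def using \<sigma> D by simp
    then have "0 \<le> X" by (simp add: knot_def order_trans[OF _ X])
    then have m: "knot (segment X) \<le> X" "X < knot (Suc (segment X))" by (rule segment_bounds)+
    have "Suc M \<le> segment X"
    proof (rule ccontr)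
      assume "\<not> Suc M \<le> segment X"
      then have "knot (Suc (segment X)) \<le> knot (Suc M)" by (intro knot_mono) simp
      with X m(2) show False by simp
    qed
    then obtain k where k: "segment X = Suc k" "M \<le> k" by (cases "segment X") auto
    have "profile X - profile (X - D) \<le> slope (Suc k) * D"
      using profile_eq_piece[OF m] piece_le_profile[of "Suc k" "X - D"] k(1)
      by (simp add: piece_def algebra_simps)
    also have "\<dots> \<le> slope k * (2 * real k + 2 - D - \<alpha>)"
    proof -
      have "D + \<alpha> \<le> (2 * real k + 2) * (1 - D)"
        using M k(2) D by (smt (verit) mult_right_mono of_nat_mono)
      then have "(2 * real k + 2) * D \<le> 2 * real k + 2 - D - \<alpha>" by (simp add: algebra_simps)
      then have "slope k * ((2 * real k + 2) * D) \<le> slope k * (2 * real k + 2 - D - \<alpha>)"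
        using slope_ge_1[of k] by (intro mult_left_mono) auto
      then show ?thesis by (simp add: mult.assoc)
    qed
    also have "\<dots> \<le> piece k (\<sigma> - \<alpha>)"
    proof -
      have "knot (Suc k) \<le> X" using m(1) k(1) by simp
      then have "2 * real k + 2 - D - \<alpha> \<le> 1 + (\<sigma> - \<alpha>) - knot k"
        using knot_Suc_diff[of k] \<beta> unfolding X_def by simp
      then show ?thesis unfolding piece_def using slope_ge_1[of k] by (simp add: mult_left_mono)
    qed
    also have "\<dots> \<le> profile (\<sigma> - \<alpha>)" by (rule piece_le_profile)
    finally show ?thesis unfolding X_def D_def by simp
  qed
  show ?thesis by (rule eventually_mono[OF eventually_ge_at_top bound])
qed

lemma eventually_Phi_ratio_mono:
  assumes st: "0 < s" "s \<le> t"
  shows "\<forall>\<^sub>F y in at_top. 0 \<le> point_form 0 [(1/t, t), (- 1/s, s)] (\<lambda>x. Phi (x * y) / Phi y)"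
  using eventually_gt_at_top[of 0]
proof eventually_elim
  case (elim y)
  have "profile (ln s + ln y) / profile (ln y) \<le> profile (ln t + ln y) / profile (ln y)"
    using st profile_ge_1[of "ln y"] by (intro divide_right_mono profile_mono) auto
  then show ?case
    using Phi_ratio[OF elim, of s] Phi_ratio[OF elim, of t] st by (simp add: point_form_def)
qed

lemma eventually_Phi_ratio_doubling:
  assumes ts: "0 < t" "t \<le> s" "s \<le> 1/2"
  shows "\<forall>\<^sub>F y in at_top.
    0 \<le> point_form 0 [(1/t, t), (- 1/(2 * s), 2 * s), (1/s, s)] (\<lambda>x. Phi (x * y) / Phi y)"
proof -
  have "\<forall>\<^sub>F y in at_top.
      profile (ln y + ln s + ln 2) - profile (ln y + ln s) \<le> profile (ln y + ln t)"
    using eventually_compose_filterlim[OF profile_increment_le[of "- ln s" "- ln t"] ln_at_top] ts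
    by simp
  with eventually_gt_at_top[of 0] show ?thesis
  proof eventually_elim
    case (elim y)
    have "point_form 0 [(1/t, t), (- 1/(2 * s), 2 * s), (1/s, s)] (\<lambda>x. Phi (x * y) / Phi y)
      = (profile (ln y + ln t) - profile (ln y + ln s + ln 2) + profile (ln y + ln s)) / profile (ln y)"
      using Phi_ratio[OF elim(1), of t] Phi_ratio[OF elim(1), of s]
        Phi_ratio[OF elim(1), of "2 * s"] ts
      by (simp add: point_form_def ln_mult add_ac diff_divide_distrib add_divide_distrib)
    also have "\<dots> \<ge> 0" using elim(2) profile_ge_1[of "ln y"] by simp
    finally show ?case .
  qed
qed

lemma C_F_Phi_equiv_identity: "equiv_each (C_F Phi) (\<lambda>t. t)"
  unfolding equiv_each_def
proof
  fix G assume G: "G \<in> C_F Phi"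
  have Phi_nonzero: "\<forall>\<^sub>F y in at_top. Phi y \<noteq> 0"
    using eventually_gt_at_top[of 0] by eventually_elim (use Phi_ge in force)
  have "0 \<le> point_form (- 1) [(1, 1)] G"
    by (rule point_form_nonneg_C_F[OF _ eventually_mono[OF Phi_nonzero] G])
      (simp_all add: point_form_def)
  moreover have "0 \<le> point_form 1 [(- 1, 1)] G"
    by (rule point_form_nonneg_C_F[OF _ eventually_mono[OF Phi_nonzero] G])
      (simp_all add: point_form_def)
  ultimately have "G 1 = 1" by (simp add: point_form_def)
  moreover have "G s / s \<le> G t / t" if "0 < s" "s \<le> t" "t \<le> 1" for s t
    using point_form_nonneg_C_F[OF _ eventually_Phi_ratio_mono[OF that(1,2)] G] that
    by (simp add: point_form_def)
  moreover have "G (2 * s) / (2 * s) - G s / s \<le> G t / t" if "0 < t" "t \<le> s" "s \<le> 1/2" for t s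
    using point_form_nonneg_C_F[OF _ eventually_Phi_ratio_doubling[OF that] G] that
    by (simp add: point_form_def)
  ultimately show "\<exists>C>0. \<forall>t\<in>{0<..1}. t / C \<le> G t \<and> G t \<le> C * t"
    by (rule linear_bounds_of_ratio_conditions)
qed

text \<open>Along \<open>y = exp (knot n + v)\<close> the ratio \<open>Phi (x * y) / Phi y\<close> sees only the \<open>n\<close>-th piece of the
  profile when \<open>x \<ge> exp (- v)\<close>; for smaller \<open>x\<close> it sees earlier pieces, whose slopes are negligible
  compared with \<open>slope n\<close>.\<close>

definition ratio_limit :: "real \<Rightarrow> real \<Rightarrow> real" where
  "ratio_limit v x = x * (1 + v + ln (max x (exp (- v)))) / (1 + v)"

lemma Phi_ratio_at_knot:
  assumes v: "0 \<le> v" "v < 2 * real n + 1" and x: "0 < x"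
  shows "Phi (x * exp (knot n + v)) / Phi (exp (knot n + v))
    = x * profile (ln x + (knot n + v)) / (slope n * (1 + v))"
proof -
  have "profile (knot n + v) = slope n * (1 + v)"
    using v knot_Suc_diff[of n] by (subst profile_eq_piece[of n]) (simp_all add: piece_def)
  moreover have "Phi (x * exp (knot n + v)) / Phi (exp (knot n + v))
    = x * (Phi (x * exp (knot n + v)) / (x * Phi (exp (knot n + v))))"
    using x by simp
  ultimately show ?thesis using Phi_ratio[of "exp (knot n + v)" x] x by simp
qed

lemma x_ln_x_ge: "0 < x \<Longrightarrow> x * ln x \<ge> - (1::real)"
  using ln_le_minus_one[of "1 / x"] by (simp add: ln_div field_simps)

lemma Phi_ratio_approx:
  assumes v: "0 \<le> v" "v < 2 * real (Suc k) + 1" and x: "0 \<le> x" "x \<le> 1"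
  shows "\<bar>Phi (x * exp (knot (Suc k) + v)) / Phi (exp (knot (Suc k) + v)) - ratio_limit v x\<bar>
    \<le> 1 / (2 * real (Suc k))"
proof (cases "x = 0")
  case False
  define n where "n = Suc k"
  define \<rho> where "\<rho> = ln x + (knot n + v)"
  have x0: "x > 0" using x False by simp
  have slope_n: "slope n = slope k * (2 * real n)" unfolding n_def by simp
  have ratio: "Phi (x * exp (knot n + v)) / Phi (exp (knot n + v)) = x * profile \<rho> / (slope n * (1 + v))"
    unfolding \<rho>_def n_def by (rule Phi_ratio_at_knot[OF v x0])
  show ?thesis
  proof (cases "exp (- v) \<le> x")
    case True
    then have "- v \<le> ln x" "ln x \<le> 0" using x x0 by (auto simp: ln_ge_iff)
    then have "profile \<rho> = slope n * (1 + v + ln x)"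
      using v knot_Suc_diff[of n] unfolding \<rho>_def n_def
      by (subst profile_eq_piece[of "Suc k"]) (simp_all add: piece_def algebra_simps)
    then show ?thesis
      using True slope_ge_1[of k] ratio by (simp add: ratio_limit_def n_def max_def)
  next
    case False
    then have "ln x < ln (exp (- v))" using x0 by (subst ln_less_cancel_iff) auto
    then have lx: "ln x < - v" by simp
    have "profile \<rho> \<le> profile (knot n)" using lx unfolding \<rho>_def by (intro profile_mono) simp
    also have "\<dots> = slope n"
      using knot_mono[of n "Suc n"] by (subst profile_eq_piece[of n]) (simp_all add: piece_def knot_def)
    finally have up: "profile \<rho> \<le> slope n" .
    have "piece k \<rho> \<le> profile \<rho>" by (rule piece_le_profile)
    moreover have "piece k \<rho> \<ge> slope n + slope k * ln x"
      unfolding piece_def \<rho>_def slope_n using knot_Suc_diff[of k] v slope_ge_1[of k]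
      by (simp add: n_def algebra_simps mult_left_mono)
    ultimately have lo: "slope n + slope k * ln x \<le> profile \<rho>" by linarith
    have "x * (slope n - profile \<rho>) \<le> x * (- (slope k * ln x))"
      using lo x0 by (intro mult_left_mono) auto
    also have "\<dots> = slope k * (- (x * ln x))" by simp
    also have "\<dots> \<le> slope k"
      using mult_left_mono[of "- (x * ln x)" 1 "slope k"] x_ln_x_ge[OF x0] slope_ge_1[of k] by simp
    finally have err: "x * (slope n - profile \<rho>) \<le> slope k" .
    have den: "slope n * (1 + v) > 0" using slope_ge_1[of n] v(1) by simp
    have "ratio_limit v x = x * slope n / (slope n * (1 + v))"
      using False slope_ge_1[of n] by (simp add: ratio_limit_def max_def)
    moreover have "x * profile \<rho> / (slope n * (1 + v)) \<le> x * slope n / (slope n * (1 + v))"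
      using up x0 den by (intro divide_right_mono mult_left_mono) auto
    ultimately have "\<bar>Phi (x * exp (knot n + v)) / Phi (exp (knot n + v)) - ratio_limit v x\<bar>
        = x * slope n / (slope n * (1 + v)) - x * profile \<rho> / (slope n * (1 + v))"
      unfolding ratio by simp
    also have "\<dots> = x * (slope n - profile \<rho>) / (slope n * (1 + v))"
      by (simp add: diff_divide_distrib right_diff_distrib)
    also have "\<dots> \<le> slope k / slope n"
      using err up x0 v(1) slope_ge_1[of n] slope_ge_1[of k]
      by (intro frac_le) (auto simp: mult_le_cancel_left1)
    also have "\<dots> = 1 / (2 * real n)" using slope_n slope_ge_1[of k] by simp
    finally show ?thesis unfolding n_def .
  qed
qed (simp add: Phi_def ratio_limit_def)

lemma ratio_limit_in_E_F:
  assumes v: "v \<ge> 0"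
  shows "ratio_limit v \<in> E_F Phi"
  unfolding E_F_def
proof
  fix A :: real assume "A \<in> {0<..}"
  then have A: "A > 0" by simp
  have "max x (exp (- v)) \<noteq> 0" for x by (simp add: max.strict_coboundedI2 less_imp_neq[symmetric])
  then have cont: "continuous_on {0..1} (ratio_limit v)"
    unfolding ratio_limit_def using v by (intro continuous_intros) auto
  have approx: "\<exists>y>A. \<forall>x\<in>{0..1}. \<bar>Phi (x * y) / Phi y - ratio_limit v x\<bar> < e"
    if e: "e > 0" for e
  proof -
    obtain k :: nat where k: "max (max (ln A) v) (1/e) < real k" using reals_Archimedean2 by blast
    define y where "y = exp (knot (Suc k) + v)"
    have "ln A < knot (Suc k) + v" using k v real_le_knot[of "Suc k"] by simp
    then have "A < y" unfolding y_def using A by (metis exp_less_mono exp_ln)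
    moreover have "1 / (2 * real (Suc k)) < e"
    proof -
      have "1 < e * real k" using k e by (simp add: divide_less_eq mult.commute)
      also have "\<dots> \<le> e * (2 * real (Suc k))" using e by (intro mult_left_mono) auto
      finally show ?thesis by (simp add: divide_less_eq mult.commute)
    qed
    moreover have "\<bar>Phi (x * y) / Phi y - ratio_limit v x\<bar> \<le> 1 / (2 * real (Suc k))"
      if "x \<in> {0..1}" for x
      unfolding y_def using that k by (intro Phi_ratio_approx[OF v]) auto
    ultimately show ?thesis by (intro exI[of _ y]) fastforce
  qed
  show "ratio_limit v \<in> E_FA Phi A"
    unfolding E_FA_def C01_closure_def
  proof (intro CollectI conjI cont allI impI)
    fix e :: real assume "e > 0"
    then obtain y where "y > A" "\<forall>x\<in>{0..1}. \<bar>Phi (x * y) / Phi y - ratio_limit v x\<bar> < e"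
      using approx by blast
    then show "\<exists>f\<in>{(\<lambda>x. Phi (x * y) / Phi y) |y. A < y}. \<forall>x\<in>{0..1}. \<bar>f x - ratio_limit v x\<bar> < e"
      by (intro bexI[of _ "\<lambda>x. Phi (x * y) / Phi y"]) auto
  qed
qed

lemma E_F_Phi_not_uniform: "\<not> equiv_unif (E_F Phi) (\<lambda>t. t)"
proof
  assume "equiv_unif (E_F Phi) (\<lambda>t. t)"
  then obtain C where C: "C > 0" "\<forall>H\<in>E_F Phi. \<forall>t\<in>{0<..1}. t / C \<le> H t"
    unfolding equiv_unif_def by blast
  define t where "t = exp (- C)"
  have t: "t \<in> {0<..1}" unfolding t_def using C by simp
  have "ratio_limit C t = t / (1 + C)" unfolding ratio_limit_def t_def by simp
  moreover have "t / C \<le> ratio_limit C t" using C ratio_limit_in_E_F[of C] t by simp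
  ultimately have "t / C \<le> t / (1 + C)" by simp
  moreover have "t / (1 + C) < t / C" using C t by (intro divide_strict_left_mono) auto
  ultimately show False by simp
qed

theorem mainTheorem1:
  shows "\<exists>\<Phi>. orlicz_function \<Phi> \<and> equiv_each (C_F \<Phi>) (\<lambda>t. t)
              \<and> \<not> equiv_unif (E_F \<Phi>) (\<lambda>t. t)"
  using orlicz_function_Phi C_F_Phi_equiv_identity E_F_Phi_not_uniform by blast
end
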